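(* Let $D_1\subset\mathbb{C}$ be a domain biholomorphic to $\mathbb{C}_*:=\mathbb{C}\setminus\{0\}$. Then $h_{D_1\times D_2}\equiv\kappa_{D_1\times D_2}$ for every domain $D_2\subset\mathbb{C}$.
   Context: $E$ denotes the open unit disc in $\mathbb{C}$, and $\mathcal{O}(E,D)$ the set of holomorphic maps $E\to D$. For a domain $D\subset\mathbb{C}^n$, $z\in D$, $X\in\mathbb{C}^n$, the Kobayashi–Royden pseudometric is $\kappa_D(z;X):=\inf\{|\alpha| : \exists f\in\mathcal{O}(E,D),\ f(0)=z,\ \alpha f'(0)=X\}$ and the Hahn pseudometric is $h_D(z;X):=\inf\{|\alpha| : \exists f\in\mathcal{O}(E,D) \text{ injective},\ f(0)=z,\ \alpha f'(0)=X\}$. The notation $h_D\equiv\kappa_D$ means equality for all $(z,X)\in D\times\mathbb{C}^n$. *)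

theory Defs
  imports "HOL-Complex_Analysis.Complex_Analysis"
begin

definition hol_disc :: "(complex \<Rightarrow> complex \<times> complex) \<Rightarrow> (complex \<times> complex) set \<Rightarrow> bool" where
  "hol_disc f D \<longleftrightarrow> (\<lambda>t. fst (f t)) holomorphic_on ball 0 1 \<and>
                      (\<lambda>t. snd (f t)) holomorphic_on ball 0 1 \<and> f ` ball 0 1 \<subseteq> D"

definition disc_deriv0 :: "(complex \<Rightarrow> complex \<times> complex) \<Rightarrow> complex \<times> complex" where
  "disc_deriv0 f = (deriv (\<lambda>t. fst (f t)) 0, deriv (\<lambda>t. snd (f t)) 0)"

definition kobayashi :: "(complex \<times> complex) set \<Rightarrow> complex \<times> complex \<Rightarrow> complex \<times> complex \<Rightarrow> real" where
  "kobayashi D z X = Inf {norm \<alpha> | \<alpha>::complex. \<exists>f. hol_disc f D \<and> f 0 = z \<and>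
       (\<alpha> * fst (disc_deriv0 f), \<alpha> * snd (disc_deriv0 f)) = X}"

definition hahn :: "(complex \<times> complex) set \<Rightarrow> complex \<times> complex \<Rightarrow> complex \<times> complex \<Rightarrow> real" where
  "hahn D z X = Inf {norm \<alpha> | \<alpha>::complex. \<exists>f. hol_disc f D \<and> inj_on f (ball 0 1) \<and> f 0 = z \<and>
       (\<alpha> * fst (disc_deriv0 f), \<alpha> * snd (disc_deriv0 f)) = X}"

end

(*
  Composing with the biholomorphism psi : C* -> D1, it suffices to match every Kobayashi-Royden
  competitor f = (f1, f2) through (psi w0, z2) with nonzero tangent vector by an injective disc
  (psi o W, G) with the same centre and tangent vector; a zero tangent vector is matched with
  alpha = 0 by any injective disc. Taking W of the form w0 exp (...), it never vanishes and its
  derivative at 0 can be prescribed freely.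
  If f2'(0) is nonzero, take G = f2 and W = w0 exp (K (f2 - f2(0))) (1 + t/2): on a fibre of f2
  the value of W determines 1 + t/2. If f2'(0) = 0, take W = w0 exp (A t) and
  G = z2 + rho (A t - exp (A t) + 1): then G'(0) = 0, and W and G together determine A t.
*)
theory Submission
  imports Defs
begin

lemma hol_disc_center_mem: "hol_disc f D \<Longrightarrow> f 0 \<in> D"
  by (auto simp: hol_disc_def)

lemma exists_hol_disc_tangent:
  assumes "open D" "z \<in> D"
  obtains \<alpha> f where "hol_disc f D" "f 0 = z"
    "(\<alpha> * fst (disc_deriv0 f), \<alpha> * snd (disc_deriv0 f)) = X"
proof -
  obtain e where "e > 0" and e: "ball z e \<subseteq> D"
    using assms open_contains_ball by blast
  define s where "s = norm (fst X) + norm (snd X)"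
  have "s \<ge> 0" by (simp add: s_def)
  define c where "c = e / (s + 1)"
  have "c > 0" using \<open>e > 0\<close> \<open>s \<ge> 0\<close> by (simp add: c_def)
  define f where "f = (\<lambda>t. (fst z + of_real c * t * fst X, snd z + of_real c * t * snd X))"
  have "f ` ball 0 1 \<subseteq> D"
  proof (rule image_subsetI)
    fix t :: complex assume "t \<in> ball 0 1"
    then have "norm t < 1" by simp
    have "f t - z = (of_real c * t * fst X, of_real c * t * snd X)"
      by (simp add: f_def prod_eq_iff)
    then have "dist z (f t) = norm (of_real c * t * fst X, of_real c * t * snd X)"
      by (metis dist_commute dist_norm)
    also have "\<dots> \<le> c * norm t * s"
      using norm_Pair_le[of "of_real c * t * fst X" "of_real c * t * snd X"] \<open>c > 0\<close>
      by (simp add: s_def norm_mult distrib_left)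
    also have "\<dots> \<le> c * s"
      using \<open>norm t < 1\<close> \<open>c > 0\<close> \<open>s \<ge> 0\<close> mult_left_le_one_le[of s "norm t"] by simp
    also have "\<dots> < e"
      using \<open>e > 0\<close> \<open>s \<ge> 0\<close> by (simp add: c_def field_simps)
    finally show "f t \<in> D" using e by auto
  qed
  then have "hol_disc f D"
    unfolding hol_disc_def f_def by (auto intro!: holomorphic_intros)
  moreover have "deriv (\<lambda>t. a + complex_of_real c * t * x) 0 = complex_of_real c * x" for a x
    by (rule DERIV_imp_deriv) (auto intro!: derivative_eq_intros)
  then have "disc_deriv0 f = (of_real c * fst X, of_real c * snd X)"
    by (simp add: disc_deriv0_def f_def)
  moreover have "f 0 = z"
    by (simp add: f_def)
  ultimately show ?thesis
    using \<open>c > 0\<close> by (intro that[of f "inverse (of_real c)"]) (simp_all add: prod_eq_iff)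
qed

lemma hahn_eq_kobayashiI:
  assumes "open D" "z \<in> D"
    and dominated: "\<And>\<alpha> f. hol_disc f D \<Longrightarrow> f 0 = z \<Longrightarrow>
        (\<alpha> * fst (disc_deriv0 f), \<alpha> * snd (disc_deriv0 f)) = X \<Longrightarrow>
        \<exists>\<beta> g. hol_disc g D \<and> inj_on g (ball 0 1) \<and> g 0 = z \<and>
          (\<beta> * fst (disc_deriv0 g), \<beta> * snd (disc_deriv0 g)) = X \<and> norm \<beta> \<le> norm \<alpha>"
  shows "hahn D z X = kobayashi D z X"
proof -
  define H where "H = {norm \<alpha> | \<alpha>::complex. \<exists>f. hol_disc f D \<and> inj_on f (ball 0 1) \<and> f 0 = z \<and>
       (\<alpha> * fst (disc_deriv0 f), \<alpha> * snd (disc_deriv0 f)) = X}"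
  define K where "K = {norm \<alpha> | \<alpha>::complex. \<exists>f. hol_disc f D \<and> f 0 = z \<and>
       (\<alpha> * fst (disc_deriv0 f), \<alpha> * snd (disc_deriv0 f)) = X}"
  have below: "\<exists>a\<in>H. a \<le> b" if "b \<in> K" for b
  proof -
    obtain \<alpha> f where b: "b = norm \<alpha>" and f: "hol_disc f D" "f 0 = z"
      "(\<alpha> * fst (disc_deriv0 f), \<alpha> * snd (disc_deriv0 f)) = X"
      using \<open>b \<in> K\<close> unfolding K_def by blast
    obtain \<beta> g where "hol_disc g D" "inj_on g (ball 0 1)" "g 0 = z"
      "(\<beta> * fst (disc_deriv0 g), \<beta> * snd (disc_deriv0 g)) = X" and "norm \<beta> \<le> norm \<alpha>"
      using dominated[OF f] by blast
    then have "norm \<beta> \<in> H"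
      unfolding H_def by blast
    with \<open>norm \<beta> \<le> norm \<alpha>\<close> show ?thesis
      unfolding b by blast
  qed
  obtain \<alpha> f where "hol_disc f D" "f 0 = z"
    "(\<alpha> * fst (disc_deriv0 f), \<alpha> * snd (disc_deriv0 f)) = X"
    using exists_hol_disc_tangent[OF assms(1,2)] .
  then have "norm \<alpha> \<in> K"
    unfolding K_def by blast
  then have "H \<noteq> {}"
    using below by blast
  moreover have "H \<subseteq> K"
    unfolding H_def K_def by blast
  moreover have "bdd_below H" "bdd_below K"
    unfolding H_def K_def by (auto intro: bdd_belowI[of _ 0])
  ultimately have "Inf H = Inf K"
    using \<open>norm \<alpha> \<in> K\<close> below by (intro antisym cInf_mono cInf_superset_mono) auto
  then show ?thesis
    unfolding hahn_def kobayashi_def H_def K_def .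
qed

lemma hol_disc_Times_compose_injective:
  fixes \<psi> W G :: "complex \<Rightarrow> complex"
  assumes "open U" "\<psi> holomorphic_on U" "inj_on \<psi> U" "\<psi> ` U \<subseteq> D1"
    and "W holomorphic_on ball 0 1" "W ` ball 0 1 \<subseteq> U"
    and "G holomorphic_on ball 0 1" "G ` ball 0 1 \<subseteq> D2"
    and "inj_on (\<lambda>t. (W t, G t)) (ball 0 1)"
  shows "hol_disc (\<lambda>t. (\<psi> (W t), G t)) (D1 \<times> D2)"
    and "inj_on (\<lambda>t. (\<psi> (W t), G t)) (ball 0 1)"
    and "disc_deriv0 (\<lambda>t. (\<psi> (W t), G t)) = (deriv \<psi> (W 0) * deriv W 0, deriv G 0)"
proof -
  have "(\<psi> \<circ> W) holomorphic_on ball 0 1"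
    using assms(5,2,6) by (rule holomorphic_on_compose_gen)
  then show "hol_disc (\<lambda>t. (\<psi> (W t), G t)) (D1 \<times> D2)"
    using assms(4,6-8) unfolding hol_disc_def by (auto simp: o_def)
  show "inj_on (\<lambda>t. (\<psi> (W t), G t)) (ball 0 1)"
    using assms(3,6,9) by (auto simp: inj_on_def image_subset_iff)
  have "W 0 \<in> U"
    using assms(6) by auto
  then have "deriv (\<psi> \<circ> W) 0 = deriv \<psi> (W 0) * deriv W 0"
    using assms(1,2,5) by (simp add: deriv_chain holomorphic_on_imp_differentiable_at)
  then show "disc_deriv0 (\<lambda>t. (\<psi> (W t), G t)) = (deriv \<psi> (W 0) * deriv W 0, deriv G 0)"
    by (simp add: disc_deriv0_def o_def)
qed

lemma nonvanishing_separating_companion: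
  fixes g :: "complex \<Rightarrow> complex"
  assumes "g holomorphic_on ball 0 1" "deriv g 0 \<noteq> 0" "w0 \<noteq> 0"
  obtains W where "W holomorphic_on ball 0 1" "0 \<notin> W ` ball 0 1" "W 0 = w0" "deriv W 0 = v"
    "inj_on (\<lambda>t. (W t, g t)) (ball 0 1)"
proof
  define K where "K = (v / w0 - 1/2) / deriv g 0"
  define W where "W = (\<lambda>t. w0 * exp (K * (g t - g 0)) * (1 + t/2))"
  show "W holomorphic_on ball 0 1"
    unfolding W_def using assms(1) by (intro holomorphic_intros) auto
  have "1 + t/2 \<noteq> 0" if "t \<in> ball 0 1" for t :: complex
  proof
    assume "1 + t/2 = 0"
    then have "t = -2" by (simp add: field_simps eq_neg_iff_add_eq_0)
    with that show False by simp
  qed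
  then show "0 \<notin> W ` ball 0 1"
    using assms(3) by (auto simp: W_def)
  show "W 0 = w0"
    by (simp add: W_def)
  have "(W has_field_derivative w0 * (K * deriv g 0) + w0 / 2) (at 0)"
    unfolding W_def
    by (rule derivative_eq_intros holomorphic_derivI[OF assms(1)] refl | simp)+
  moreover have "w0 * (K * deriv g 0) + w0 / 2 = v"
    using assms(2,3) by (simp add: K_def field_simps)
  ultimately show "deriv W 0 = v"
    by (simp add: DERIV_imp_deriv)
  show "inj_on (\<lambda>t. (W t, g t)) (ball 0 1)"
    using assms(3) by (auto simp: inj_on_def W_def)
qed

lemma nonvanishing_separating_pair_critical:
  fixes v w0 z2 :: complex
  assumes "v \<noteq> 0" "w0 \<noteq> 0" "r > 0"
  obtains W G where "W holomorphic_on ball 0 1" "0 \<notin> W ` ball 0 1" "W 0 = w0" "deriv W 0 = v"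
    "G holomorphic_on ball 0 1" "G ` ball 0 1 \<subseteq> ball z2 r" "G 0 = z2" "deriv G 0 = 0"
    "inj_on (\<lambda>t. (W t, G t)) (ball 0 1)"
proof
  define A where "A = v / w0"
  have "A \<noteq> 0"
    using assms(1,2) by (simp add: A_def)
  define M where "M = norm A + exp (norm A) + 1"
  have "M > 0"
    unfolding M_def by (simp add: add_nonneg_pos)
  define \<rho> where "\<rho> = complex_of_real (r / (2 * M))"
  have norm_\<rho>: "norm \<rho> = r / (2 * M)"
    unfolding \<rho>_def norm_of_real using assms(3) \<open>M > 0\<close> by simp
  then have "\<rho> \<noteq> 0"
    using assms(3) \<open>M > 0\<close> by auto
  define W where "W = (\<lambda>t. w0 * exp (A * t))"
  define G where "G = (\<lambda>t. z2 + \<rho> * (A * t - exp (A * t) + 1))"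
  show "W holomorphic_on ball 0 1" "G holomorphic_on ball 0 1"
    unfolding W_def G_def by (intro holomorphic_intros)+
  show "0 \<notin> W ` ball 0 1" "W 0 = w0" "G 0 = z2"
    using assms(2) by (auto simp: W_def G_def)
  have "(W has_field_derivative w0 * A) (at 0)"
    unfolding W_def by (rule derivative_eq_intros refl | simp)+
  then show "deriv W 0 = v"
    using assms(2) by (simp add: DERIV_imp_deriv A_def)
  have "(G has_field_derivative \<rho> * (A - A)) (at 0)"
    unfolding G_def by (rule derivative_eq_intros refl | simp)+
  then show "deriv G 0 = 0"
    by (simp add: DERIV_imp_deriv)
  show "G ` ball 0 1 \<subseteq> ball z2 r"
  proof (rule image_subsetI)
    fix t :: complex assume "t \<in> ball 0 1"
    then have "norm (A * t) \<le> norm A"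
      by (simp add: norm_mult mult_left_le)
    then have "norm (exp (A * t)) \<le> exp (norm A)"
      using norm_exp order_trans by fastforce
    then have "norm (A * t - exp (A * t) + 1) \<le> M"
      using \<open>norm (A * t) \<le> norm A\<close> norm_triangle_ineq[of "A * t - exp (A * t)" 1]
        norm_triangle_ineq4[of "A * t" "exp (A * t)"]
      unfolding M_def norm_one by linarith
    have "dist z2 (G t) = norm \<rho> * norm (A * t - exp (A * t) + 1)"
      by (simp add: G_def dist_norm norm_mult)
    also have "\<dots> \<le> r / (2 * M) * M"
      unfolding norm_\<rho> using \<open>norm (A * t - exp (A * t) + 1) \<le> M\<close> assms(3) \<open>M > 0\<close>
      by (intro mult_left_mono) auto
    also have "\<dots> < r"
      using assms(3) \<open>M > 0\<close> by simp
    finally show "G t \<in> ball z2 r"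
      by simp
  qed
  show "inj_on (\<lambda>t. (W t, G t)) (ball 0 1)"
  proof (rule inj_onI)
    fix s t assume "(W s, G s) = (W t, G t)"
    then have "exp (A * s) = exp (A * t)" and "G s = G t"
      using assms(2) by (auto simp: W_def)
    then have "A * s = A * t"
      using \<open>\<rho> \<noteq> 0\<close> by (simp add: G_def)
    then show "s = t"
      using \<open>A \<noteq> 0\<close> by simp
  qed
qed

lemma injective_disc_with_tangent_of_disc:
  fixes \<psi> g :: "complex \<Rightarrow> complex"
  assumes "\<psi> holomorphic_on - {0}" "inj_on \<psi> (- {0})" "\<psi> ` (- {0}) \<subseteq> D1" "w0 \<noteq> 0"
    and "g holomorphic_on ball 0 1" "g ` ball 0 1 \<subseteq> D2" "deriv g 0 \<noteq> 0"
  obtains f where "hol_disc f (D1 \<times> D2)" "inj_on f (ball 0 1)" "f 0 = (\<psi> w0, g 0)"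
    "disc_deriv0 f = (v, deriv g 0)"
proof -
  have "deriv \<psi> w0 \<noteq> 0"
    using assms(1,2,4) by (intro holomorphic_injective_imp_regular) auto
  obtain W where W: "W holomorphic_on ball 0 1" "0 \<notin> W ` ball 0 1" "W 0 = w0"
    "deriv W 0 = v / deriv \<psi> w0" "inj_on (\<lambda>t. (W t, g t)) (ball 0 1)"
    using nonvanishing_separating_companion[OF assms(5,7,4)] .
  have "W ` ball 0 1 \<subseteq> - {0}"
    using W(2) by blast
  note f = hol_disc_Times_compose_injective[OF open_Compl[OF closed_singleton] assms(1-3) W(1) this
      assms(5,6) W(5)]
  show ?thesis
    by (rule that[OF f(1,2)]) (use f(3) W(3,4) \<open>deriv \<psi> w0 \<noteq> 0\<close> in simp_all)
qed

lemma injective_disc_with_horizontal_tangent: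
  fixes \<psi> :: "complex \<Rightarrow> complex"
  assumes "\<psi> holomorphic_on - {0}" "inj_on \<psi> (- {0})" "\<psi> ` (- {0}) \<subseteq> D1" "w0 \<noteq> 0"
    and "v \<noteq> 0" "open D2" "z2 \<in> D2"
  obtains f where "hol_disc f (D1 \<times> D2)" "inj_on f (ball 0 1)" "f 0 = (\<psi> w0, z2)"
    "disc_deriv0 f = (v, 0)"
proof -
  obtain r where "r > 0" and ball_D2: "ball z2 r \<subseteq> D2"
    using assms(6,7) open_contains_ball by blast
  have "deriv \<psi> w0 \<noteq> 0"
    using assms(1,2,4) by (intro holomorphic_injective_imp_regular) auto
  then have "v / deriv \<psi> w0 \<noteq> 0"
    using assms(5) by simp
  obtain W G where W: "W holomorphic_on ball 0 1" "0 \<notin> W ` ball 0 1" "W 0 = w0"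
    "deriv W 0 = v / deriv \<psi> w0" and G: "G holomorphic_on ball 0 1" "G ` ball 0 1 \<subseteq> ball z2 r"
    "G 0 = z2" "deriv G 0 = 0" and inj: "inj_on (\<lambda>t. (W t, G t)) (ball 0 1)"
    using nonvanishing_separating_pair_critical[OF \<open>v / deriv \<psi> w0 \<noteq> 0\<close> assms(4) \<open>r > 0\<close>] .
  have W_into: "W ` ball 0 1 \<subseteq> - {0}"
    using W(2) by blast
  have G_into: "G ` ball 0 1 \<subseteq> D2"
    using G(2) ball_D2 by blast
  note f = hol_disc_Times_compose_injective[OF open_Compl[OF closed_singleton] assms(1-3)
      W(1) W_into G(1) G_into inj]
  show ?thesis
    by (rule that[OF f(1,2)]) (use f(3) W(3,4) G(3,4) \<open>deriv \<psi> w0 \<noteq> 0\<close> in simp_all)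
qed

lemma injective_disc_with_same_tangent:
  fixes \<psi> :: "complex \<Rightarrow> complex"
  assumes "\<psi> holomorphic_on - {0}" "inj_on \<psi> (- {0})" "\<psi> ` (- {0}) \<subseteq> D1" "w0 \<noteq> 0"
    and "open D2" "hol_disc f (D1 \<times> D2)" "f 0 = (\<psi> w0, z2)" "disc_deriv0 f \<noteq> (0, 0)"
  obtains g where "hol_disc g (D1 \<times> D2)" "inj_on g (ball 0 1)" "g 0 = f 0"
    "disc_deriv0 g = disc_deriv0 f"
proof (cases "snd (disc_deriv0 f) = 0")
  case True
  then have "fst (disc_deriv0 f) \<noteq> 0"
    using assms(8) by (auto simp: prod_eq_iff)
  moreover have "z2 \<in> D2"
    using hol_disc_center_mem[OF assms(6)] assms(7) by simp
  ultimately obtain g where "hol_disc g (D1 \<times> D2)" "inj_on g (ball 0 1)" "g 0 = (\<psi> w0, z2)"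
    "disc_deriv0 g = (fst (disc_deriv0 f), 0)"
    using injective_disc_with_horizontal_tangent[OF assms(1-4) _ assms(5)] by metis
  then show ?thesis
    using that True assms(7) by (metis prod.collapse)
next
  case False
  define f2 where "f2 = (\<lambda>t. snd (f t))"
  have "f2 holomorphic_on ball 0 1" "f2 ` ball 0 1 \<subseteq> D2" "f2 0 = z2"
    "deriv f2 0 = snd (disc_deriv0 f)"
    using assms(6,7) by (auto simp: f2_def hol_disc_def disc_deriv0_def)
  then obtain g where "hol_disc g (D1 \<times> D2)" "inj_on g (ball 0 1)" "g 0 = (\<psi> w0, z2)"
    "disc_deriv0 g = (fst (disc_deriv0 f), snd (disc_deriv0 f))"
    using injective_disc_with_tangent_of_disc[OF assms(1-4)] False by metis
  then show ?thesis
    using that assms(7) by simp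
qed

lemma kobayashi_disc_dominated_by_injective:
  fixes \<psi> :: "complex \<Rightarrow> complex"
  assumes "\<psi> holomorphic_on - {0}" "inj_on \<psi> (- {0})" "\<psi> ` (- {0}) \<subseteq> D1" "w0 \<noteq> 0"
    and "open D2" "hol_disc f (D1 \<times> D2)" "f 0 = (\<psi> w0, z2)"
    and X: "(\<alpha> * fst (disc_deriv0 f), \<alpha> * snd (disc_deriv0 f)) = X"
  shows "\<exists>\<beta> g. hol_disc g (D1 \<times> D2) \<and> inj_on g (ball 0 1) \<and> g 0 = (\<psi> w0, z2) \<and>
      (\<beta> * fst (disc_deriv0 g), \<beta> * snd (disc_deriv0 g)) = X \<and> norm \<beta> \<le> norm \<alpha>"
proof (cases "disc_deriv0 f = (0, 0)")
  case True
  have "z2 \<in> D2"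
    using hol_disc_center_mem[OF assms(6)] assms(7) by simp
  then obtain g where "hol_disc g (D1 \<times> D2)" "inj_on g (ball 0 1)" "g 0 = (\<psi> w0, z2)"
    "disc_deriv0 g = (1, 0)"
    using injective_disc_with_horizontal_tangent[OF assms(1-4) one_neq_zero assms(5)] by metis
  then show ?thesis
    using True X by (intro exI[of _ 0] exI[of _ g]) auto
next
  case False
  then obtain g where "hol_disc g (D1 \<times> D2)" "inj_on g (ball 0 1)" "g 0 = f 0"
    "disc_deriv0 g = disc_deriv0 f"
    using injective_disc_with_same_tangent[OF assms(1-7)] by metis
  then show ?thesis
    using X assms(7) by (intro exI[of _ \<alpha>] exI[of _ g]) auto
qed

theorem proposition3:
  fixes D1 D2 :: "complex set"
  assumes "open D1" "connected D1" "D1 \<noteq> {}"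
    and "\<exists>\<phi> \<psi>. \<phi> holomorphic_on D1 \<and> \<phi> ` D1 = - {0} \<and> \<psi> holomorphic_on (- {0}) \<and>
              (\<forall>z\<in>D1. \<psi> (\<phi> z) = z) \<and> (\<forall>w\<in>- {0}. \<phi> (\<psi> w) = w)"
    and "open D2" "connected D2" "D2 \<noteq> {}"
  shows "\<forall>z \<in> D1 \<times> D2. \<forall>X. hahn (D1 \<times> D2) z X = kobayashi (D1 \<times> D2) z X"
proof (intro ballI allI)
  obtain \<phi> \<psi> where \<phi>_onto: "\<phi> ` D1 = - {0}" and \<psi>: "\<psi> holomorphic_on (- {0})"
    and \<psi>_\<phi>: "\<forall>z\<in>D1. \<psi> (\<phi> z) = z" and \<phi>_\<psi>: "\<forall>w\<in>- {0}. \<phi> (\<psi> w) = w"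
    using assms(4) by blast
  have \<psi>_inj: "inj_on \<psi> (- {0})"
    using \<phi>_\<psi> by (metis inj_onI)
  have \<psi>_into: "\<psi> ` (- {0}) \<subseteq> D1"
    using \<psi>_\<phi> by (auto simp flip: \<phi>_onto)
  fix z X assume "z \<in> D1 \<times> D2"
  then obtain z1 z2 where "z1 \<in> D1" "z2 \<in> D2" and z: "z = (z1, z2)"
    by blast
  then have "\<phi> z1 \<noteq> 0" and z1: "\<psi> (\<phi> z1) = z1"
    using \<phi>_onto \<psi>_\<phi> by auto
  show "hahn (D1 \<times> D2) z X = kobayashi (D1 \<times> D2) z X"
  proof (rule hahn_eq_kobayashiI)
    show "open (D1 \<times> D2)" "z \<in> D1 \<times> D2"
      using assms(1,5) \<open>z \<in> D1 \<times> D2\<close> by (auto intro: open_Times)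
    show "\<exists>\<beta> g. hol_disc g (D1 \<times> D2) \<and> inj_on g (ball 0 1) \<and> g 0 = z \<and>
        (\<beta> * fst (disc_deriv0 g), \<beta> * snd (disc_deriv0 g)) = X \<and> norm \<beta> \<le> norm \<alpha>"
      if "hol_disc f (D1 \<times> D2)" "f 0 = z"
        "(\<alpha> * fst (disc_deriv0 f), \<alpha> * snd (disc_deriv0 f)) = X" for \<alpha> f
      using kobayashi_disc_dominated_by_injective[OF \<psi> \<psi>_inj \<psi>_into \<open>\<phi> z1 \<noteq> 0\<close> assms(5) that(1)]
        that(2,3) unfolding z z1 .
  qed
qed

end
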